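(* For each order function $g$ there exists an order function $h$ such that every $\mathrm{DNR}_g$ function Turing-computes an $\mathrm{SNPR}_h$ function.
   Context: $\varphi_e$ denotes the $e$-th partial recursive function. A function $f:\omega\to\omega$ is DNR if $f(e)\neq\varphi_e(e)$ for every $e$ such that $\varphi_e(e)$ is defined. A function $f:\omega\to\omega$ is SNPR (strongly non-partial-recursive) if for every partial recursive function $\psi$, for all but finitely many $n$, if $\psi(n)$ is defined then $f(n)\neq\psi(n)$. An order function is a recursive, nondecreasing, unbounded function $h:\omega\to\omega$ with $h(0)\ge 2$. For a class $\mathrm{C}$ of functions and an order function $h$, $\mathrm{C}_h$ denotes the members of $\mathrm{C}$ bounded by $h$ (i.e., $f(n)<h(n)$ for all $n$). *)

theory Defs
  imports Main "HOL-Library.Nat_Bijection"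
begin

text \<open>Programs for unary partial recursive functionals (relative to an oracle),
  using Cantor pairing prod_encode / prod_decode as the coding of tuples.\<close>

datatype recf = Zero | Succ | Ident | Fst | Snd | Orc
  | Pair recf recf | Comp recf recf | Prim recf recf | Mn recf

inductive ev :: "(nat \<Rightarrow> nat) \<Rightarrow> recf \<Rightarrow> nat \<Rightarrow> nat \<Rightarrow> bool" for A where
  ev_zero: "ev A Zero x 0"
| ev_succ: "ev A Succ x (Suc x)"
| ev_ident: "ev A Ident x x"
| ev_fst: "ev A Fst x (fst (prod_decode x))"
| ev_snd: "ev A Snd x (snd (prod_decode x))"
| ev_orc: "ev A Orc x (A x)"
| ev_pair: "ev A f x y \<Longrightarrow> ev A g x z \<Longrightarrow> ev A (Pair f g) x (prod_encode (y, z))"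
| ev_comp: "ev A g x y \<Longrightarrow> ev A f y z \<Longrightarrow> ev A (Comp f g) x z"
| ev_prim0: "ev A g y z \<Longrightarrow> ev A (Prim g h) (prod_encode (0, y)) z"
| ev_primS: "ev A (Prim g h) (prod_encode (n, y)) r \<Longrightarrow>
     ev A h (prod_encode (n, prod_encode (r, y))) z \<Longrightarrow>
     ev A (Prim g h) (prod_encode (Suc n, y)) z"
| ev_mn: "ev A f (prod_encode (n, x)) 0 \<Longrightarrow>
     (\<forall>m<n. \<exists>v. v \<noteq> 0 \<and> ev A f (prod_encode (m, x)) v) \<Longrightarrow>
     ev A (Mn f) x n"

text \<open>Goedel numbering of programs (a computable bijection recf -> nat).\<close>

fun code :: "recf \<Rightarrow> nat" where
  "code Zero = 0"
| "code Succ = 1"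
| "code Ident = 2"
| "code Fst = 3"
| "code Snd = 4"
| "code Orc = 5"
| "code (Pair f g) = 6 + 4 * prod_encode (code f, code g)"
| "code (Comp f g) = 7 + 4 * prod_encode (code f, code g)"
| "code (Prim f g) = 8 + 4 * prod_encode (code f, code g)"
| "code (Mn f) = 9 + 4 * code f"

text \<open>phi e x y: the e-th partial recursive function (no oracle) on x is defined with value y.\<close>
definition phi :: "nat \<Rightarrow> nat \<Rightarrow> nat \<Rightarrow> bool" where
  "phi e x y \<longleftrightarrow> (\<exists>p. code p = e \<and> ev (\<lambda>_. 0) p x y)"

definition partial_recursive :: "(nat \<Rightarrow> nat option) \<Rightarrow> bool" where
  "partial_recursive \<psi> \<longleftrightarrow> (\<exists>e. \<forall>x y. \<psi> x = Some y \<longleftrightarrow> phi e x y)"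

definition recursive :: "(nat \<Rightarrow> nat) \<Rightarrow> bool" where
  "recursive h \<longleftrightarrow> (\<exists>e. \<forall>x. phi e x (h x))"

definition turing_computes :: "(nat \<Rightarrow> nat) \<Rightarrow> (nat \<Rightarrow> nat) \<Rightarrow> bool" where
  "turing_computes f s \<longleftrightarrow> (\<exists>p. \<forall>x. ev f p x (s x))"

definition DNR :: "(nat \<Rightarrow> nat) \<Rightarrow> bool" where
  "DNR f \<longleftrightarrow> (\<forall>e y. phi e e y \<longrightarrow> f e \<noteq> y)"

definition SNPR :: "(nat \<Rightarrow> nat) \<Rightarrow> bool" where
  "SNPR f \<longleftrightarrow> (\<forall>\<psi>. partial_recursive \<psi> \<longrightarrow> finite {n. \<psi> n = Some (f n)})"

definition order_function :: "(nat \<Rightarrow> nat) \<Rightarrow> bool" where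
  "order_function h \<longleftrightarrow> recursive h \<and> mono h \<and> (\<forall>m. \<exists>n. m < h n) \<and> h 0 \<ge> 2"

definition bounded_by :: "(nat \<Rightarrow> nat) \<Rightarrow> (nat \<Rightarrow> nat) \<Rightarrow> bool" where
  "bounded_by h f \<longleftrightarrow> (\<forall>n. f n < h n)"

end

theory Submission
  imports Defs
begin

text \<open>Let \<open>d(n,k)\<close> be an index of the constant program that runs \<open>\<phi>\<^sub>k\<close> on \<open>n\<close> and
  returns entry \<open>n - k\<close> of the result, read as a coded tuple. From \<open>f\<close> compute
  \<open>s(n) = \<langle>f(d(n,n)), \<dots>, f(d(n,0))\<rangle>\<close>. If \<open>\<phi>\<^sub>k(n) = s(n)\<close> with \<open>k \<le> n\<close>, then
  \<open>\<phi>\<^bsub>d(n,k)\<^esub>(d(n,k)) = f(d(n,k))\<close>; so for DNR \<open>f\<close> every \<open>\<phi>\<^sub>k\<close> agrees with \<open>s\<close> only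
  below \<open>k\<close>. If \<open>f < g\<close>, then \<open>s\<close> is dominated by the same tuple built from the
  recursive \<open>g\<close>, and a monotone recursive majorant of that tuple is the order function \<open>h\<close>.\<close>

lemma ev_Fst_pair: "ev A Fst (prod_encode (a, b)) a"
  using ev_fst[of A "prod_encode (a, b)"] by simp

lemma ev_Snd_pair: "ev A Snd (prod_encode (a, b)) b"
  using ev_snd[of A "prod_encode (a, b)"] by simp

lemma ev_Fst_Snd: "ev A (Comp Fst Snd) (prod_encode (n, prod_encode (r, y))) r"
  by (rule ev_comp[OF ev_Snd_pair ev_Fst_pair])

lemma ev_Prim_iterate:
  assumes "ev A g y (r 0)"
    and "\<And>n. ev A h (prod_encode (n, prod_encode (r n, y))) (r (Suc n))"
  shows "ev A (Prim g h) (prod_encode (n, y)) (r n)"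
  by (induction n) (use assms in \<open>auto intro: ev_prim0 ev_primS\<close>)

definition rec_prog :: "recf \<Rightarrow> recf \<Rightarrow> recf" where
  "rec_prog g h = Comp (Prim g h) (Pair Ident Zero)"

lemma ev_rec_prog:
  assumes "ev A g 0 (r 0)"
    and "\<And>n. ev A h (prod_encode (n, prod_encode (r n, 0))) (r (Suc n))"
  shows "ev A (rec_prog g h) n (r n)"
  unfolding rec_prog_def
  by (rule ev_comp[OF ev_pair[OF ev_ident ev_zero] ev_Prim_iterate[OF assms]])

fun add_const :: "nat \<Rightarrow> recf \<Rightarrow> recf" where
  "add_const 0 p = p"
| "add_const (Suc c) p = Comp Succ (add_const c p)"

lemma ev_add_const: "ev A p x v \<Longrightarrow> ev A (add_const c p) x (v + c)"
  by (induction c) (auto intro: ev_comp ev_succ)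

definition const_prog :: "nat \<Rightarrow> recf" where
  "const_prog c = add_const c Zero"

lemma ev_const_prog: "ev A (const_prog c) x c"
  unfolding const_prog_def using ev_add_const[OF ev_zero] by fastforce

definition add_prog :: recf where
  "add_prog = Prim Ident (Comp Succ (Comp Fst Snd))"

lemma ev_add_prog: "ev A add_prog (prod_encode (a, b)) (a + b)"
  unfolding add_prog_def
  by (rule ev_Prim_iterate[where r = "\<lambda>n. n + b", simplified])
     (auto intro: ev_ident ev_comp[OF ev_Fst_Snd ev_succ])

definition times4_prog :: recf where
  "times4_prog = (let double = Comp add_prog (Pair Ident Ident) in Comp double double)"

lemma ev_times4_prog: "ev A times4_prog x (4 * x)"
proof -
  have double: "ev A (Comp add_prog (Pair Ident Ident)) y (2 * y)" for y
    using ev_comp[OF ev_pair[OF ev_ident ev_ident] ev_add_prog] by (simp add: mult_2)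
  show ?thesis
    unfolding times4_prog_def Let_def using ev_comp[OF double double] by simp
qed

definition pred_prog :: recf where
  "pred_prog = rec_prog Zero Fst"

lemma ev_pred_prog: "ev A pred_prog n (n - 1)"
  unfolding pred_prog_def
proof (rule ev_rec_prog[where r = "\<lambda>n. n - 1"])
  show "ev A Fst (prod_encode (n, prod_encode (n - 1, 0))) (Suc n - 1)" for n
    using ev_Fst_pair by simp
qed (simp add: ev_zero)

definition diff_prog :: recf where
  "diff_prog = Prim Ident (Comp pred_prog (Comp Fst Snd))"

lemma ev_diff_prog: "ev A diff_prog (prod_encode (i, n)) (n - i)"
  unfolding diff_prog_def
proof (rule ev_Prim_iterate[where r = "\<lambda>i. n - i"])
  show "ev A (Comp pred_prog (Comp Fst Snd)) (prod_encode (i, prod_encode (n - i, n))) (n - Suc i)"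
    for i using ev_comp[OF ev_Fst_Snd ev_pred_prog, of A i "n - i" n] by simp
qed (simp add: ev_ident)

section \<open>Coded tuples\<close>

text \<open>\<open>tuple F m\<close> codes \<open>\<langle>F (m - 1), \<dots>, F 0\<rangle>\<close> as nested pairs ending in \<open>0\<close>, so \<open>F k\<close>
  sits at position \<open>m - 1 - k\<close>.\<close>

definition tuple_tail :: "nat \<Rightarrow> nat" where
  "tuple_tail x = snd (prod_decode x)"

definition tuple_nth :: "nat \<Rightarrow> nat \<Rightarrow> nat" where
  "tuple_nth i x = fst (prod_decode ((tuple_tail ^^ i) x))"

fun tuple :: "(nat \<Rightarrow> nat) \<Rightarrow> nat \<Rightarrow> nat" where
  "tuple F 0 = 0"
| "tuple F (Suc m) = prod_encode (F m, tuple F m)"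

lemma tuple_nth_tuple: "k < m \<Longrightarrow> tuple_nth (m - Suc k) (tuple F m) = F k"
proof (induction m)
  case (Suc m)
  show ?case
  proof (cases "k = m")
    case False
    with Suc.prems have "k < m" by simp
    then have "Suc m - Suc k = Suc (m - Suc k)" by simp
    then show ?thesis
      using Suc.IH[OF \<open>k < m\<close>]
      by (simp only: tuple_nth_def funpow_Suc_right comp_def) (simp add: tuple_tail_def)
  qed (simp add: tuple_nth_def)
qed simp

lemma prod_encode_mono: "a \<le> c \<Longrightarrow> b \<le> d \<Longrightarrow> prod_encode (a, b) \<le> prod_encode (c, d)"
  unfolding prod_encode_def triangle_def
  by (simp add: add_mono div_le_mono mult_le_mono)

lemma tuple_mono: "(\<And>k. F k \<le> G k) \<Longrightarrow> tuple F m \<le> tuple G m"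
  by (induction m) (auto intro: prod_encode_mono)

definition nth_prog :: recf where
  "nth_prog = Comp Fst (Prim Ident (Comp Snd (Comp Fst Snd)))"

lemma ev_nth_prog: "ev A nth_prog (prod_encode (i, x)) (tuple_nth i x)"
proof -
  have "ev A (Prim Ident (Comp Snd (Comp Fst Snd))) (prod_encode (i, x)) ((tuple_tail ^^ i) x)"
    by (rule ev_Prim_iterate[where r = "\<lambda>i. (tuple_tail ^^ i) x", simplified])
       (auto simp: tuple_tail_def intro: ev_ident ev_comp[OF ev_Fst_Snd ev_snd, simplified])
  then show ?thesis
    unfolding nth_prog_def tuple_nth_def by (rule ev_comp[OF _ ev_fst])
qed

definition pair_code :: "nat \<Rightarrow> nat \<Rightarrow> nat" where
  "pair_code a b = 6 + 4 * prod_encode (a, b)"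

definition comp_code :: "nat \<Rightarrow> nat \<Rightarrow> nat" where
  "comp_code a b = 7 + 4 * prod_encode (a, b)"

lemma code_Pair: "code (Pair f g) = pair_code (code f) (code g)"
  and code_Comp: "code (Comp f g) = comp_code (code f) (code g)"
  by (simp_all add: pair_code_def comp_code_def)

definition code_node_prog :: "nat \<Rightarrow> recf \<Rightarrow> recf \<Rightarrow> recf" where
  "code_node_prog c f g = add_const c (Comp times4_prog (Pair f g))"

lemma ev_code_node_prog:
  "ev A f x a \<Longrightarrow> ev A g x b \<Longrightarrow> ev A (code_node_prog c f g) x (c + 4 * prod_encode (a, b))"
  unfolding code_node_prog_def
  using ev_add_const[OF ev_comp[OF ev_pair ev_times4_prog]] by (simp add: add.commute)

definition code_const_prog :: recf where
  "code_const_prog = rec_prog Zero (code_node_prog 7 (const_prog 1) (Comp Fst Snd))"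

lemma ev_code_const_prog: "ev A code_const_prog n (code (const_prog n))"
  unfolding code_const_prog_def
proof (rule ev_rec_prog[where r = "\<lambda>n. code (const_prog n)"])
  show "ev A Zero 0 (code (const_prog 0))"
    by (simp add: const_prog_def ev_zero)
  show "ev A (code_node_prog 7 (const_prog 1) (Comp Fst Snd))
      (prod_encode (n, prod_encode (code (const_prog n), 0))) (code (const_prog (Suc n)))" for n
  proof -
    have "code (const_prog (Suc n)) = 7 + 4 * prod_encode (1, code (const_prog n))"
      by (simp add: const_prog_def)
    then show ?thesis
      by (simp only: ev_code_node_prog[OF ev_const_prog ev_Fst_Snd])
  qed
qed

section \<open>The diagonal programs\<close>

definition diag_prog :: "recf \<Rightarrow> nat \<Rightarrow> nat \<Rightarrow> recf" where
  "diag_prog p k n =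
     Comp nth_prog (Pair (Comp diff_prog (Pair (const_prog k) (const_prog n))) (Comp p (const_prog n)))"

lemma ev_diag_prog: "ev A p n v \<Longrightarrow> ev A (diag_prog p k n) x (tuple_nth (n - k) v)"
  unfolding diag_prog_def
  by (rule ev_comp[OF ev_pair[OF ev_comp[OF ev_pair[OF ev_const_prog ev_const_prog] ev_diff_prog]
        ev_comp[OF ev_const_prog]] ev_nth_prog])

definition diag_code :: "nat \<Rightarrow> nat \<Rightarrow> nat" where
  "diag_code n k =
     comp_code (code nth_prog)
       (pair_code (comp_code (code diff_prog) (pair_code (code (const_prog k)) (code (const_prog n))))
          (comp_code k (code (const_prog n))))"

lemma code_diag_prog: "code (diag_prog p (code p) n) = diag_code n (code p)"
  by (simp only: diag_prog_def diag_code_def code_Pair code_Comp)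

definition diag_code_prog :: recf where
  "diag_code_prog =
     code_node_prog 7 (const_prog (code nth_prog))
       (code_node_prog 6
          (code_node_prog 7 (const_prog (code diff_prog))
             (code_node_prog 6 (Comp code_const_prog Fst) (Comp code_const_prog (Comp Snd Snd))))
          (code_node_prog 7 Fst (Comp code_const_prog (Comp Snd Snd))))"

lemma ev_diag_code_prog: "ev A diag_code_prog (prod_encode (k, prod_encode (r, n))) (diag_code n k)"
proof -
  have "ev A (Comp code_const_prog Fst) (prod_encode (k, prod_encode (r, n))) (code (const_prog k))"
    by (rule ev_comp[OF ev_Fst_pair ev_code_const_prog])
  moreover have "ev A (Comp code_const_prog (Comp Snd Snd)) (prod_encode (k, prod_encode (r, n)))
      (code (const_prog n))"
    by (rule ev_comp[OF ev_comp[OF ev_Snd_pair ev_Snd_pair] ev_code_const_prog])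
  ultimately show ?thesis
    unfolding diag_code_prog_def diag_code_def pair_code_def comp_code_def
    by (intro ev_code_node_prog ev_const_prog ev_Fst_pair)
qed

definition diag_tuple :: "(nat \<Rightarrow> nat) \<Rightarrow> nat \<Rightarrow> nat" where
  "diag_tuple F n = tuple (\<lambda>k. F (diag_code n k)) (Suc n)"

definition diag_tuple_prog :: "recf \<Rightarrow> recf" where
  "diag_tuple_prog Q = Comp (Prim Zero (Pair (Comp Q diag_code_prog) (Comp Fst Snd))) (Pair Succ Ident)"

lemma ev_diag_tuple_prog:
  assumes "\<And>x. ev A Q x (F x)"
  shows "ev A (diag_tuple_prog Q) n (diag_tuple F n)"
proof -
  have "ev A (Prim Zero (Pair (Comp Q diag_code_prog) (Comp Fst Snd))) (prod_encode (m, n))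
      (tuple (\<lambda>k. F (diag_code n k)) m)" for m
    by (rule ev_Prim_iterate)
       (auto intro: ev_zero ev_pair[OF ev_comp[OF ev_diag_code_prog assms] ev_Fst_Snd])
  then show ?thesis
    unfolding diag_tuple_prog_def diag_tuple_def by (rule ev_comp[OF ev_pair[OF ev_succ ev_ident]])
qed

lemma turing_computes_diag_tuple: "turing_computes f (diag_tuple f)"
  unfolding turing_computes_def using ev_diag_tuple_prog[OF ev_orc] by blast

lemma diag_tuple_mono: "(\<And>x. F x \<le> G x) \<Longrightarrow> diag_tuple F n \<le> diag_tuple G n"
  unfolding diag_tuple_def by (rule tuple_mono)

lemma DNR_diag_tuple_disagrees:
  assumes "DNR f" and "phi k n (diag_tuple f n)"
  shows "n < k"
proof (rule ccontr)
  assume "\<not> n < k"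
  from assms(2) obtain p where "code p = k" and p: "ev (\<lambda>_. 0) p n (diag_tuple f n)"
    unfolding phi_def by blast
  have "tuple_nth (n - k) (diag_tuple f n) = f (diag_code n k)"
    using tuple_nth_tuple[of k "Suc n"] \<open>\<not> n < k\<close> by (simp add: diag_tuple_def)
  with ev_diag_prog[OF p] have "ev (\<lambda>_. 0) (diag_prog p k n) (diag_code n k) (f (diag_code n k))"
    by metis
  then have "phi (diag_code n k) (diag_code n k) (f (diag_code n k))"
    unfolding phi_def using code_diag_prog[of p n] \<open>code p = k\<close> by blast
  with \<open>DNR f\<close> show False
    unfolding DNR_def by blast
qed

lemma SNPR_diag_tuple: "DNR f \<Longrightarrow> SNPR (diag_tuple f)"
  unfolding SNPR_def partial_recursive_def
  by (auto intro: finite_subset[of _ "{..<_}"] dest: DNR_diag_tuple_disagrees)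

text \<open>Compound constructors are told apart by the residue of their codes mod 4.\<close>

lemma code_inj: "code p = code q \<Longrightarrow> p = q"
  by (induction p arbitrary: q; case_tac q; simp; presburger?)

lemma recursive_program: "recursive F \<Longrightarrow> \<exists>p. \<forall>x. ev (\<lambda>_. 0) p x (F x)"
  unfolding recursive_def phi_def by (metis code_inj)

lemma recursive_diag_tuple: "recursive F \<Longrightarrow> recursive (diag_tuple F)"
  using recursive_program ev_diag_tuple_prog unfolding recursive_def phi_def by metis

fun mono_majorant :: "(nat \<Rightarrow> nat) \<Rightarrow> nat \<Rightarrow> nat" where
  "mono_majorant G 0 = G 0 + 2"
| "mono_majorant G (Suc n) = mono_majorant G n + G (Suc n) + 1"

lemma mono_mono_majorant: "mono (mono_majorant G)"
  unfolding mono_iff_le_Suc by simp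

lemma mono_majorant_gt: "G n + n < mono_majorant G n"
  by (induction n) auto

definition mono_majorant_prog :: "recf \<Rightarrow> recf" where
  "mono_majorant_prog Q = rec_prog (add_const 2 (Comp Q Zero))
     (add_const 1 (Comp add_prog (Pair (Comp Fst Snd) (Comp Q (Comp Succ Fst)))))"

lemma ev_mono_majorant_prog:
  assumes "\<And>x. ev A Q x (G x)"
  shows "ev A (mono_majorant_prog Q) n (mono_majorant G n)"
  unfolding mono_majorant_prog_def
proof (rule ev_rec_prog)
  show "ev A (add_const 2 (Comp Q Zero)) 0 (mono_majorant G 0)"
    using ev_add_const[OF ev_comp[OF ev_zero assms], where c = 2] by simp
  show "ev A (add_const 1 (Comp add_prog (Pair (Comp Fst Snd) (Comp Q (Comp Succ Fst)))))
      (prod_encode (n, prod_encode (mono_majorant G n, 0))) (mono_majorant G (Suc n))" for n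
    using ev_add_const[OF ev_comp[OF ev_pair[OF ev_Fst_Snd ev_comp[OF ev_comp[OF ev_Fst_pair ev_succ]
          assms]] ev_add_prog], where c = 1]
    by simp
qed

lemma order_function_mono_majorant: "recursive G \<Longrightarrow> order_function (mono_majorant G)"
proof -
  assume "recursive G"
  then have "recursive (mono_majorant G)"
    using recursive_program ev_mono_majorant_prog unfolding recursive_def phi_def by metis
  moreover have "\<forall>m. \<exists>n. m < mono_majorant G n"
    using mono_majorant_gt add_lessD1 add.commute by metis
  ultimately show ?thesis
    unfolding order_function_def by (simp add: mono_mono_majorant)
qed

theorem mainTheorem2:
  assumes "order_function g"
  shows "\<exists>h. order_function h \<and>
           (\<forall>f. DNR f \<and> bounded_by g f \<longrightarrow>
                (\<exists>s. SNPR s \<and> bounded_by h s \<and> turing_computes f s))"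
proof -
  let ?h = "mono_majorant (diag_tuple g)"
  have "recursive g"
    using assms unfolding order_function_def by blast
  then have "order_function ?h"
    by (intro order_function_mono_majorant recursive_diag_tuple)
  moreover have "SNPR (diag_tuple f) \<and> bounded_by ?h (diag_tuple f) \<and> turing_computes f (diag_tuple f)"
    if "DNR f" and "bounded_by g f" for f
  proof -
    have "diag_tuple f n \<le> diag_tuple g n" for n
      using \<open>bounded_by g f\<close> unfolding bounded_by_def by (simp add: diag_tuple_mono less_imp_le)
    then have "bounded_by ?h (diag_tuple f)"
      unfolding bounded_by_def using mono_majorant_gt le_less_trans add_lessD1 by metis
    with SNPR_diag_tuple[OF \<open>DNR f\<close>] turing_computes_diag_tuple show ?thesis
      by blast
  qed
  ultimately show ?thesis
    by blast
qed

end
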